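(* Let $\mathcal{X}$ be a nonempty subset of $\mathbb{R}^n$ and $\mathbf{F}:\mathcal{X}\to I(\mathbb{R})$ an interval-valued function such that \[\mathbf{F}(x)\ominus_{gH}\mathbf{F}(y)\preceq\mathbf{C}\odot\|x-y\|\quad\text{for all }x,y\in\mathcal{X},\] where $\mathbf{C}=[c,c]$ with $c\in\mathbb{R}$. Then $\|\mathbf{F}(x)\ominus_{gH}\mathbf{F}(y)\|_{I(\mathbb{R})}\le c\|x-y\|$ for all $x,y\in\mathcal{X}$.
   Context: $I(\mathbb{R})$: nonempty compact intervals $\mathbf{A}=[\underline{a},\overline{a}]$; $\lambda\odot\mathbf{A}=[\min\{\lambda\underline{a},\lambda\overline{a}\},\max\{\lambda\underline{a},\lambda\overline{a}\}]$; $\mathbf{A}\ominus_{gH}\mathbf{B}=[\min\{\underline{a}-\underline{b},\overline{a}-\overline{b}\},\max\{\underline{a}-\underline{b},\overline{a}-\overline{b}\}]$; $\mathbf{A}\preceq\mathbf{B}$ iff $\underline{a}\le\underline{b}$ and $\overline{a}\le\overline{b}$; $\|\mathbf{A}\|_{I(\mathbb{R})}=\max\{|\underline{a}|,|\overline{a}|\}$; $\|\cdot\|$ Euclidean norm. *)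

theory Defs
  imports "HOL-Analysis.Analysis"
begin

typedef interval = "{(a::real, b::real). a \<le> b}"
  by auto

setup_lifting type_definition_interval

lift_definition lo :: "interval \<Rightarrow> real" is fst .
lift_definition hi :: "interval \<Rightarrow> real" is snd .

lift_definition mk_interval :: "real \<Rightarrow> real \<Rightarrow> interval"
  is "\<lambda>a b. (min a b, max a b)" by auto

definition iscale :: "real \<Rightarrow> interval \<Rightarrow> interval" where
  "iscale t A = mk_interval (t * lo A) (t * hi A)"

definition gH_minus :: "interval \<Rightarrow> interval \<Rightarrow> interval" where
  "gH_minus A B = mk_interval (lo A - lo B) (hi A - hi B)"

definition ile :: "interval \<Rightarrow> interval \<Rightarrow> bool" where
  "ile A B \<longleftrightarrow> lo A \<le> lo B \<and> hi A \<le> hi B"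

definition inorm :: "interval \<Rightarrow> real" where
  "inorm A = max \<bar>lo A\<bar> \<bar>hi A\<bar>"

end

theory Submission
  imports Defs
begin

text \<open>The gH-difference of \<open>A\<close> and \<open>B\<close> has norm equal to the larger of the upper endpoints
of \<open>A \<ominus>\<^sub>g\<^sub>H B\<close> and \<open>B \<ominus>\<^sub>g\<^sub>H A\<close>. The hypothesis, applied to the pairs \<open>(x, y)\<close> and \<open>(y, x)\<close>,
bounds both upper endpoints by \<open>c \<parallel>x - y\<parallel>\<close>, since the upper endpoint of \<open>[c, c] \<odot> t\<close> is \<open>t c\<close>.\<close>

lemma lo_mk_interval [simp]: "lo (mk_interval a b) = min a b"
  by transfer simp

lemma hi_mk_interval [simp]: "hi (mk_interval a b) = max a b"
  by transfer simp

lemma hi_iscale_degenerate [simp]: "hi (iscale t (mk_interval c c)) = t * c"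
  by (simp add: iscale_def)

lemma ile_imp_hi_le: "ile A B \<Longrightarrow> hi A \<le> hi B"
  by (simp add: ile_def)

lemma inorm_gH_minus_eq_max_hi:
  "inorm (gH_minus A B) = max (hi (gH_minus A B)) (hi (gH_minus B A))"
  by (auto simp: inorm_def gH_minus_def)

theorem mainTheorem13:
  fixes X :: "(real ^ 'n) set" and F :: "real ^ 'n \<Rightarrow> interval" and c :: real
  assumes "X \<noteq> {}"
    and "\<forall>x\<in>X. \<forall>y\<in>X. ile (gH_minus (F x) (F y)) (iscale (norm (x - y)) (mk_interval c c))"
  shows "\<forall>x\<in>X. \<forall>y\<in>X. inorm (gH_minus (F x) (F y)) \<le> c * norm (x - y)"
proof (intro ballI)
  fix x y assume "x \<in> X" "y \<in> X"
  then have "hi (gH_minus (F x) (F y)) \<le> norm (x - y) * c"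
    and "hi (gH_minus (F y) (F x)) \<le> norm (y - x) * c"
    using assms(2) by (metis ile_imp_hi_le hi_iscale_degenerate)+
  then show "inorm (gH_minus (F x) (F y)) \<le> c * norm (x - y)"
    by (simp add: inorm_gH_minus_eq_max_hi norm_minus_commute mult.commute)
qed

end
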